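(* Let $\overline{\mathsf{M}}_s$ be a fine saturated sharp monoid, $r$ a positive integer, and let $\mathfrak X_s$, $\mathfrak X_{s_r}$, $V\subseteq V_r$, $\mathsf{PL}_r$ and $\nabla$ be as in the context. Let $\delta\in\mathbb Z^{V_r}$ be supported on $V$. Let $D,D'\in\mathbb Z^{V_r}$ and $\alpha_D,\alpha_{D'}\in\mathsf{PL}_r$ satisfy $rD=\delta+\nabla\alpha_D$ and $rD'=\delta+\nabla\alpha_{D'}$, with $\alpha_D$ and $\alpha_{D'}$ both vanishing on every vertex of $V$, and suppose $D$ is linearly equivalent to $D'$, i.e. $D'-D\in\nabla(\mathsf{PL}_r)$. Then there exists $\beta\in\mathsf{PL}_r$ vanishing on $V$ with $D'=D+\nabla\beta$.
   Context: $\mathfrak X_s$ is a finite connected graph (loops and multiple edges allowed) with vertex set $V$, each edge $e$ having a length $\ell(e)\in\overline{\mathsf{M}}_s\setminus\{0\}$. Let $\overline{\mathsf{M}}_{s_r}=\tfrac1r\overline{\mathsf{M}}_s\subseteq\overline{\mathsf{M}}_s^{\mathsf{gp}}\otimes\mathbb Q$. $\mathfrak X_{s_r}$ is obtained by subdividing each edge $e$ of $\mathfrak X_s$ into a chain of exactly $r$ edges of length $\ell(e)/r$; its vertex set is $V_r\supseteq V$. $\mathsf{PL}_r$ is the group of functions $\alpha\colon V_r\to\overline{\mathsf{M}}_{s_r}^{\mathsf{gp}}$ with integer slopes: for each edge of $\mathfrak X_{s_r}$ of length $\lambda$ from $u$ to $u'$ there is $k\in\mathbb Z$ with $\alpha(u')-\alpha(u)=k\lambda$.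 Divisors are elements of $\mathbb Z^{V_r}$, and $\nabla\alpha(v)$ is the sum of the outgoing slopes of $\alpha$ along all half-edges at $v$. *)

theory Defs
  imports Complex_Main "HOL-Library.Function_Algebras"
begin

text \<open>The rationalised group of the monoid is modelled inside the rational vector space
  'k => rat (componentwise operations); the monoid is a subset of it.\<close>

definition sc :: "rat \<Rightarrow> ('k \<Rightarrow> rat) \<Rightarrow> ('k \<Rightarrow> rat)" where
  "sc q x = (\<lambda>i. q * x i)"

definition mgp :: "('k \<Rightarrow> rat) set \<Rightarrow> ('k \<Rightarrow> rat) set" where
  "mgp M = {a - b | a b. a \<in> M \<and> b \<in> M}"

text \<open>Fine (finitely generated; integrality is automatic inside a group).\<close>
definition fine_monoid :: "('k \<Rightarrow> rat) set \<Rightarrow> bool" where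
  "fine_monoid M \<longleftrightarrow> (\<exists>G. finite G \<and>
      M = {(\<Sum>g\<in>G. sc (of_nat (c g)) g) | c :: ('k \<Rightarrow> rat) \<Rightarrow> nat. True})"

definition saturated_monoid :: "('k \<Rightarrow> rat) set \<Rightarrow> bool" where
  "saturated_monoid M \<longleftrightarrow>
     (\<forall>x\<in>mgp M. \<forall>m::nat. m > 0 \<longrightarrow> sc (of_nat m) x \<in> M \<longrightarrow> x \<in> M)"

definition sharp_monoid :: "('k \<Rightarrow> rat) set \<Rightarrow> bool" where
  "sharp_monoid M \<longleftrightarrow> (\<forall>x\<in>M. - x \<in> M \<longrightarrow> x = 0)"

definition fs_sharp_monoid :: "('k \<Rightarrow> rat) set \<Rightarrow> bool" where
  "fs_sharp_monoid M \<longleftrightarrow> fine_monoid M \<and> saturated_monoid M \<and> sharp_monoid M"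

definition metric_graph ::
  "('k \<Rightarrow> rat) set \<Rightarrow> 'v set \<Rightarrow> 'e set \<Rightarrow> ('e \<Rightarrow> 'v) \<Rightarrow> ('e \<Rightarrow> 'v) \<Rightarrow> ('e \<Rightarrow> 'k \<Rightarrow> rat) \<Rightarrow> bool" where
  "metric_graph M V E src tgt len \<longleftrightarrow> finite V \<and> finite E \<and>
     (\<forall>e\<in>E. src e \<in> V \<and> tgt e \<in> V \<and> len e \<in> M \<and> len e \<noteq> 0)"

definition connected_graph :: "'v set \<Rightarrow> 'e set \<Rightarrow> ('e \<Rightarrow> 'v) \<Rightarrow> ('e \<Rightarrow> 'v) \<Rightarrow> bool" where
  "connected_graph V E src tgt \<longleftrightarrow> V \<noteq> {} \<and>
     (\<forall>u\<in>V. \<forall>v\<in>V. (\<lambda>x y. \<exists>e\<in>E. (src e = x \<and> tgt e = y) \<or> (src e = y \<and> tgt e = x))\<^sup>*\<^sup>* u v)"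

text \<open>The subdivision X_{s_r}: edge e is replaced by the chain of r edges (e,0),...,(e,r-1);
  chain edge (e,j) goes from node e j to node e (j+1), where the new interior vertices are
  Inr (e,j), 0<j<r, and old vertices are Inl v.\<close>
definition node :: "('e \<Rightarrow> 'v) \<Rightarrow> ('e \<Rightarrow> 'v) \<Rightarrow> nat \<Rightarrow> 'e \<Rightarrow> nat \<Rightarrow> 'v + ('e \<times> nat)" where
  "node src tgt r e j = (if j = 0 then Inl (src e) else if j = r then Inl (tgt e) else Inr (e, j))"

definition sub_vertices :: "'v set \<Rightarrow> 'e set \<Rightarrow> nat \<Rightarrow> ('v + ('e \<times> nat)) set" where
  "sub_vertices V E r = Inl ` V \<union> {Inr (e, j) | e j. e \<in> E \<and> 0 < j \<and> j < r}"

definition sub_edges :: "'e set \<Rightarrow> nat \<Rightarrow> ('e \<times> nat) set" where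
  "sub_edges E r = E \<times> {..<r}"

definition sub_tail :: "('e \<Rightarrow> 'v) \<Rightarrow> ('e \<Rightarrow> 'v) \<Rightarrow> nat \<Rightarrow> 'e \<times> nat \<Rightarrow> 'v + ('e \<times> nat)" where
  "sub_tail src tgt r c = node src tgt r (fst c) (snd c)"

definition sub_head :: "('e \<Rightarrow> 'v) \<Rightarrow> ('e \<Rightarrow> 'v) \<Rightarrow> nat \<Rightarrow> 'e \<times> nat \<Rightarrow> 'v + ('e \<times> nat)" where
  "sub_head src tgt r c = node src tgt r (fst c) (Suc (snd c))"

definition sub_len :: "('e \<Rightarrow> 'k \<Rightarrow> rat) \<Rightarrow> nat \<Rightarrow> 'e \<times> nat \<Rightarrow> 'k \<Rightarrow> rat" where
  "sub_len len r c = sc (1 / of_nat r) (len (fst c))"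

text \<open>PL_r: functions on V_r with values in (M_{s_r})^gp, M_{s_r} = (1/r) M, with integer
  slopes along every edge of the subdivision (extensional: zero off V_r).\<close>
definition PL :: "('k \<Rightarrow> rat) set \<Rightarrow> 'v set \<Rightarrow> 'e set \<Rightarrow> ('e \<Rightarrow> 'v) \<Rightarrow> ('e \<Rightarrow> 'v) \<Rightarrow>
    ('e \<Rightarrow> 'k \<Rightarrow> rat) \<Rightarrow> nat \<Rightarrow> ('v + ('e \<times> nat) \<Rightarrow> 'k \<Rightarrow> rat) set" where
  "PL M V E src tgt len r = {\<alpha>.
     (\<forall>u\<in>sub_vertices V E r. \<alpha> u \<in> mgp (sc (1 / of_nat r) ` M)) \<and>
     (\<forall>u. u \<notin> sub_vertices V E r \<longrightarrow> \<alpha> u = 0) \<and>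
     (\<forall>c\<in>sub_edges E r. \<exists>k::int.
        \<alpha> (sub_head src tgt r c) - \<alpha> (sub_tail src tgt r c) = sc (of_int k) (sub_len len r c))}"

definition slope :: "('e \<Rightarrow> 'v) \<Rightarrow> ('e \<Rightarrow> 'v) \<Rightarrow> ('e \<Rightarrow> 'k \<Rightarrow> rat) \<Rightarrow> nat \<Rightarrow>
    ('v + ('e \<times> nat) \<Rightarrow> 'k \<Rightarrow> rat) \<Rightarrow> 'e \<times> nat \<Rightarrow> int" where
  "slope src tgt len r \<alpha> c = (THE k::int.
     \<alpha> (sub_head src tgt r c) - \<alpha> (sub_tail src tgt r c) = sc (of_int k) (sub_len len r c))"

text \<open>\<nabla>\<alpha>(v): sum of outgoing slopes over all half-edges at v (a loop contributes both halves).\<close>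
definition nabla :: "'v set \<Rightarrow> 'e set \<Rightarrow> ('e \<Rightarrow> 'v) \<Rightarrow> ('e \<Rightarrow> 'v) \<Rightarrow> ('e \<Rightarrow> 'k \<Rightarrow> rat) \<Rightarrow> nat \<Rightarrow>
    ('v + ('e \<times> nat) \<Rightarrow> 'k \<Rightarrow> rat) \<Rightarrow> 'v + ('e \<times> nat) \<Rightarrow> int" where
  "nabla V E src tgt len r \<alpha> u =
     (if u \<in> sub_vertices V E r then
        (\<Sum>c\<in>{c\<in>sub_edges E r. sub_tail src tgt r c = u}. slope src tgt len r \<alpha> c)
      + (\<Sum>c\<in>{c\<in>sub_edges E r. sub_head src tgt r c = u}. - slope src tgt len r \<alpha> c)
      else 0)"

definition divisors :: "'v set \<Rightarrow> 'e set \<Rightarrow> nat \<Rightarrow> ('v + ('e \<times> nat) \<Rightarrow> int) set" where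
  "divisors V E r = {D. \<forall>u. u \<notin> sub_vertices V E r \<longrightarrow> D u = 0}"

end

theory Submission
  imports Defs
begin

text \<open>Let \<open>\<gamma> \<in> PL\<^sub>r\<close> with \<open>\<nabla>\<gamma> = D' - D\<close>. Then \<open>\<phi> = \<alpha>\<^sub>D\<^sub>' - \<alpha>\<^sub>D - r\<gamma>\<close> has integer
  slopes and \<open>\<nabla>\<phi> = r(D' - D) - r(D' - D) = 0\<close>. Summation by parts turns \<open>\<nabla>\<phi> = 0\<close> into
  \<open>\<Sum>\<^sub>c k\<^sub>c\<^sup>2 \<ell>(c) = 0\<close>, where \<open>k\<^sub>c\<close> is the slope of \<open>\<phi>\<close> along the subdivision edge \<open>c\<close>; every
  term lies in the sharp monoid, so all slopes vanish and \<open>\<phi>\<close> is constant along each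
  subdivided edge, with value \<open>-r\<gamma>\<close> at its original endpoints. Hence \<open>\<beta> = \<gamma> + \<phi>/r\<close> takes
  values \<open>\<gamma>(u) - \<gamma>(v)\<close> with \<open>v \<in> V\<close>, so lies in \<open>PL\<^sub>r\<close>, vanishes on \<open>V\<close> and has the slopes
  of \<open>\<gamma>\<close>.\<close>

lemma sum_fun_apply: "(\<Sum>c\<in>S. (f c :: 'k \<Rightarrow> 'a::comm_monoid_add)) i = (\<Sum>c\<in>S. f c i)"
  by (induction S rule: infinite_finite_induct) auto

lemma sc_right_cancel:
  assumes "sc a x = sc b x" "x \<noteq> 0"
  shows "a = b"
proof -
  obtain i where "x i \<noteq> 0" using assms(2) by (auto simp: fun_eq_iff)
  moreover have "a * x i = b * x i" using assms(1) by (auto simp: sc_def fun_eq_iff)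
  ultimately show ?thesis by simp
qed

lemma sc_zero_left: "sc 0 x = 0"
  and sc_diff_left: "sc (a - b) x = sc a x - sc b x"
  by (simp_all add: sc_def fun_eq_iff algebra_simps)

lemma fine_monoid_zero:
  fixes M :: "('k \<Rightarrow> rat) set"
  assumes "fine_monoid M"
  shows "0 \<in> M"
proof -
  obtain G where G: "M = {(\<Sum>g\<in>G. sc (of_nat (c g)) g) | c :: ('k \<Rightarrow> rat) \<Rightarrow> nat. True}"
    using assms unfolding fine_monoid_def by blast
  have "(0 :: 'k \<Rightarrow> rat) = (\<Sum>g\<in>G. sc (of_nat ((\<lambda>_. 0) g)) g)"
    by (simp add: sc_def fun_eq_iff sum_fun_apply)
  then show ?thesis unfolding G mem_Collect_eq by (intro exI[of _ "\<lambda>_. 0"] conjI TrueI)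
qed

lemma fine_monoid_add:
  fixes M :: "('k \<Rightarrow> rat) set"
  assumes "fine_monoid M" "x \<in> M" "y \<in> M"
  shows "x + y \<in> M"
proof -
  obtain G where G: "M = {(\<Sum>g\<in>G. sc (of_nat (c g)) g) | c :: ('k \<Rightarrow> rat) \<Rightarrow> nat. True}"
    using assms(1) unfolding fine_monoid_def by blast
  obtain a b where "x = (\<Sum>g\<in>G. sc (of_nat (a g)) g)" "y = (\<Sum>g\<in>G. sc (of_nat (b g)) g)"
    using assms(2,3) unfolding G by blast
  then have "x + y = (\<Sum>g\<in>G. sc (of_nat ((\<lambda>g. a g + b g) g)) g)"
    by (simp add: sum.distrib[symmetric] sc_def fun_eq_iff sum_fun_apply algebra_simps)
  then show ?thesis unfolding G mem_Collect_eq by (intro exI[of _ "\<lambda>g. a g + b g"] conjI TrueI)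
qed

lemma fine_monoid_sum:
  assumes "fine_monoid M" "\<forall>c\<in>S. f c \<in> M"
  shows "sum f S \<in> M"
  using assms(2)
  by (induction S rule: infinite_finite_induct)
    (auto intro: fine_monoid_add[OF assms(1)] fine_monoid_zero[OF assms(1)])

lemma fine_monoid_smult_nat:
  assumes "fine_monoid M" "x \<in> M"
  shows "sc (of_nat n) x \<in> M"
proof (induction n)
  case 0
  then show ?case using fine_monoid_zero[OF assms(1)] by (simp add: sc_def zero_fun_def)
next
  case (Suc n)
  have "sc (of_nat (Suc n)) x = x + sc (of_nat n) x" by (simp add: sc_def fun_eq_iff algebra_simps)
  then show ?case using fine_monoid_add[OF assms(1,2) Suc] by metis
qed

lemma sharp_monoid_sum_eq_zero:
  assumes "fine_monoid M" "sharp_monoid M" "finite S" "\<forall>c\<in>S. f c \<in> M" "sum f S = 0" "c \<in> S"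
  shows "f c = 0"
proof -
  have "- f c = sum f (S - {c})"
    using assms(3,5,6) by (simp add: sum.remove minus_unique)
  moreover have "sum f (S - {c}) \<in> M"
    by (rule fine_monoid_sum[OF assms(1)]) (use assms(4) in blast)
  ultimately show ?thesis using assms(2,4,6) unfolding sharp_monoid_def by auto
qed

lemma fine_monoid_scaled_add:
  assumes "fine_monoid M" "x \<in> sc q ` M" "y \<in> sc q ` M"
  shows "x + y \<in> sc q ` M"
proof -
  obtain a b where "a \<in> M" "b \<in> M" "x = sc q a" "y = sc q b" using assms(2,3) by blast
  then have "x + y = sc q (a + b)" "a + b \<in> M"
    using fine_monoid_add[OF assms(1)] by (auto simp: sc_def fun_eq_iff algebra_simps)
  then show ?thesis by blast
qed

lemma mgp_diff:
  assumes "\<And>x y. x \<in> N \<Longrightarrow> y \<in> N \<Longrightarrow> x + y \<in> N" "a \<in> mgp N" "b \<in> mgp N"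
  shows "a - b \<in> mgp N"
proof -
  obtain a1 a2 b1 b2 where "a = a1 - a2" "b = b1 - b2" "a1 \<in> N" "a2 \<in> N" "b1 \<in> N" "b2 \<in> N"
    using assms(2,3) unfolding mgp_def by blast
  then have "a - b = (a1 + b2) - (a2 + b1)" "a1 + b2 \<in> N" "a2 + b1 \<in> N"
    using assms(1) by (auto simp: algebra_simps)
  then show ?thesis unfolding mgp_def by blast
qed

lemma sum_fibres:
  fixes g :: "'c \<Rightarrow> 'b::comm_semiring_0"
  assumes "finite Vr" "finite Er" "h ` Er \<subseteq> Vr"
  shows "(\<Sum>c\<in>Er. g c * f (h c)) = (\<Sum>u\<in>Vr. (\<Sum>c\<in>{c\<in>Er. h c = u}. g c) * f u)"
proof -
  have "(\<Sum>c\<in>Er. g c * f (h c)) = (\<Sum>u\<in>Vr. \<Sum>c\<in>{c\<in>Er. h c = u}. g c * f (h c))"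
    using sum.group[OF assms(2,1,3), of "\<lambda>c. g c * f (h c)"] by simp
  also have "\<dots> = (\<Sum>u\<in>Vr. (\<Sum>c\<in>{c\<in>Er. h c = u}. g c) * f u)"
    by (auto simp: sum_distrib_right intro!: sum.cong)
  finally show ?thesis .
qed

lemma sum_edges_by_parts:
  fixes k :: "'c \<Rightarrow> int" and f :: "'a \<Rightarrow> 'b::comm_ring_1"
  assumes "finite Vr" "finite Er" "h ` Er \<subseteq> Vr" "t ` Er \<subseteq> Vr"
  shows "(\<Sum>c\<in>Er. of_int (k c) * (f (h c) - f (t c))) =
    - (\<Sum>u\<in>Vr. of_int ((\<Sum>c\<in>{c\<in>Er. t c = u}. k c) + (\<Sum>c\<in>{c\<in>Er. h c = u}. - k c)) * f u)"
proof -
  have "(\<Sum>c\<in>Er. of_int (k c) * (f (h c) - f (t c))) =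
      (\<Sum>c\<in>Er. of_int (k c) * f (h c)) - (\<Sum>c\<in>Er. of_int (k c) * f (t c))"
    by (simp add: right_diff_distrib sum_subtractf)
  also have "\<dots> = (\<Sum>u\<in>Vr. of_int (\<Sum>c\<in>{c\<in>Er. h c = u}. k c) * f u)
      - (\<Sum>u\<in>Vr. of_int (\<Sum>c\<in>{c\<in>Er. t c = u}. k c) * f u)"
    using sum_fibres[OF assms(1-3), of "\<lambda>c. of_int (k c)" f]
      sum_fibres[OF assms(1,2,4), of "\<lambda>c. of_int (k c)" f]
    by (simp flip: of_int_sum)
  also have "\<dots> = - (\<Sum>u\<in>Vr.
      of_int ((\<Sum>c\<in>{c\<in>Er. t c = u}. k c) + (\<Sum>c\<in>{c\<in>Er. h c = u}. - k c)) * f u)"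
    by (simp add: sum_negf left_diff_distrib sum_subtractf)
  finally show ?thesis .
qed

locale subdivided_metric_graph =
  fixes M :: "('k \<Rightarrow> rat) set" and V :: "'v set" and E :: "'e set"
    and src tgt :: "'e \<Rightarrow> 'v" and len :: "'e \<Rightarrow> 'k \<Rightarrow> rat" and r :: nat
  assumes monoid: "fs_sharp_monoid M"
    and graph: "metric_graph M V E src tgt len"
    and r_pos: "0 < r"
begin

abbreviation "V\<^sub>r \<equiv> sub_vertices V E r"
abbreviation "E\<^sub>r \<equiv> sub_edges E r"
abbreviation "head\<^sub>r \<equiv> sub_head src tgt r"
abbreviation "tail\<^sub>r \<equiv> sub_tail src tgt r"
abbreviation "len\<^sub>r \<equiv> sub_len len r"
abbreviation "slope\<^sub>r \<equiv> slope src tgt len r"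
abbreviation "nabla\<^sub>r \<equiv> nabla V E src tgt len r"
abbreviation "PL\<^sub>r \<equiv> PL M V E src tgt len r"
abbreviation "G\<^sub>r \<equiv> mgp (sc (1 / of_nat r) ` M)"

definition integral_slopes :: "('v + 'e \<times> nat \<Rightarrow> 'k \<Rightarrow> rat) \<Rightarrow> bool" where
  "integral_slopes \<alpha> \<longleftrightarrow>
     (\<forall>c\<in>E\<^sub>r. \<exists>k::int. \<alpha> (head\<^sub>r c) - \<alpha> (tail\<^sub>r c) = sc (of_int k) (len\<^sub>r c))"

lemma PL_iff:
  "\<alpha> \<in> PL\<^sub>r \<longleftrightarrow> (\<forall>u\<in>V\<^sub>r. \<alpha> u \<in> G\<^sub>r) \<and> (\<forall>u. u \<notin> V\<^sub>r \<longrightarrow> \<alpha> u = 0) \<and> integral_slopes \<alpha>"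
  unfolding PL_def integral_slopes_def by simp

lemma fine: "fine_monoid M" and sharp: "sharp_monoid M"
  using monoid unfolding fs_sharp_monoid_def by auto

lemma edge_props: "e \<in> E \<Longrightarrow> src e \<in> V \<and> tgt e \<in> V \<and> len e \<in> M \<and> len e \<noteq> 0"
  using graph unfolding metric_graph_def by auto

lemma sub_edges_iff: "(e, j) \<in> E\<^sub>r \<longleftrightarrow> e \<in> E \<and> j < r"
  unfolding sub_edges_def by auto

lemma finite_sub_edges: "finite E\<^sub>r"
  using graph unfolding metric_graph_def sub_edges_def by auto

lemma finite_sub_vertices: "finite V\<^sub>r"
proof -
  have "{Inr (e, j) | e j. e \<in> E \<and> 0 < j \<and> j < r} \<subseteq> Inr ` E\<^sub>r"
    by (auto simp: sub_edges_iff)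
  then show ?thesis
    using graph finite_sub_edges finite_subset unfolding sub_vertices_def metric_graph_def by blast
qed

lemma node_in_sub_vertices: "e \<in> E \<Longrightarrow> j \<le> r \<Longrightarrow> node src tgt r e j \<in> V\<^sub>r"
  unfolding sub_vertices_def node_def using edge_props by auto

lemma head_in_sub_vertices: "c \<in> E\<^sub>r \<Longrightarrow> head\<^sub>r c \<in> V\<^sub>r"
  and tail_in_sub_vertices: "c \<in> E\<^sub>r \<Longrightarrow> tail\<^sub>r c \<in> V\<^sub>r"
  unfolding sub_head_def sub_tail_def sub_edges_def by (auto intro: node_in_sub_vertices)

lemma sub_len_nonzero: "c \<in> E\<^sub>r \<Longrightarrow> len\<^sub>r c \<noteq> 0"
proof
  assume "c \<in> E\<^sub>r" "len\<^sub>r c = 0"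
  then have "len (fst c) \<noteq> 0" "sc (1 / of_nat r) (len (fst c)) = 0"
    using edge_props by (auto simp: sub_len_def sub_edges_def)
  then show False using r_pos by (auto simp: sc_def fun_eq_iff)
qed

lemma slope_eqI:
  assumes "c \<in> E\<^sub>r" "\<alpha> (head\<^sub>r c) - \<alpha> (tail\<^sub>r c) = sc (of_int k) (len\<^sub>r c)"
  shows "slope\<^sub>r \<alpha> c = k"
  unfolding slope_def
proof (rule the_equality)
  fix k' assume "\<alpha> (head\<^sub>r c) - \<alpha> (tail\<^sub>r c) = sc (of_int k') (len\<^sub>r c)"
  then have "sc (of_int k') (len\<^sub>r c) = sc (of_int k) (len\<^sub>r c)" using assms(2) by simp
  then show "k' = k" using sc_right_cancel sub_len_nonzero[OF assms(1)] by fastforce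
qed (rule assms(2))

lemma slope_spec:
  assumes "integral_slopes \<alpha>" "c \<in> E\<^sub>r"
  shows "\<alpha> (head\<^sub>r c) - \<alpha> (tail\<^sub>r c) = sc (of_int (slope\<^sub>r \<alpha> c)) (len\<^sub>r c)"
  using assms slope_eqI unfolding integral_slopes_def by metis


lemma slope_diff:
  assumes "integral_slopes \<alpha>" "integral_slopes \<beta>"
  shows "integral_slopes (\<alpha> - \<beta>)"
    and "c \<in> E\<^sub>r \<Longrightarrow> slope\<^sub>r (\<alpha> - \<beta>) c = slope\<^sub>r \<alpha> c - slope\<^sub>r \<beta> c"
proof -
  have diff: "(\<alpha> - \<beta>) (head\<^sub>r c) - (\<alpha> - \<beta>) (tail\<^sub>r c)
      = sc (of_int (slope\<^sub>r \<alpha> c - slope\<^sub>r \<beta> c)) (len\<^sub>r c)" if "c \<in> E\<^sub>r" for c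
  proof -
    have "(\<alpha> - \<beta>) (head\<^sub>r c) - (\<alpha> - \<beta>) (tail\<^sub>r c)
        = (\<alpha> (head\<^sub>r c) - \<alpha> (tail\<^sub>r c)) - (\<beta> (head\<^sub>r c) - \<beta> (tail\<^sub>r c))"
      by (simp add: algebra_simps)
    then show ?thesis
      using slope_spec[OF assms(1) that] slope_spec[OF assms(2) that] by (simp add: sc_diff_left)
  qed
  then show "integral_slopes (\<alpha> - \<beta>)" unfolding integral_slopes_def by blast
  show "c \<in> E\<^sub>r \<Longrightarrow> slope\<^sub>r (\<alpha> - \<beta>) c = slope\<^sub>r \<alpha> c - slope\<^sub>r \<beta> c"
    using diff slope_eqI by blast
qed

lemma slope_smult:
  assumes "integral_slopes \<alpha>"
  shows "integral_slopes (\<lambda>u. sc (of_int n) (\<alpha> u))"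
    and "c \<in> E\<^sub>r \<Longrightarrow> slope\<^sub>r (\<lambda>u. sc (of_int n) (\<alpha> u)) c = n * slope\<^sub>r \<alpha> c"
proof -
  have diff: "sc (of_int n) (\<alpha> (head\<^sub>r c)) - sc (of_int n) (\<alpha> (tail\<^sub>r c))
      = sc (of_int (n * slope\<^sub>r \<alpha> c)) (len\<^sub>r c)" if "c \<in> E\<^sub>r" for c
    using slope_spec[OF assms that] by (simp add: sc_def fun_eq_iff algebra_simps)
  then show "integral_slopes (\<lambda>u. sc (of_int n) (\<alpha> u))" unfolding integral_slopes_def by blast
  show "c \<in> E\<^sub>r \<Longrightarrow> slope\<^sub>r (\<lambda>u. sc (of_int n) (\<alpha> u)) c = n * slope\<^sub>r \<alpha> c"
    using diff slope_eqI[of c "\<lambda>u. sc (of_int n) (\<alpha> u)"] by simp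
qed

lemma nabla_eq:
  "u \<in> V\<^sub>r \<Longrightarrow> nabla\<^sub>r \<alpha> u =
     (\<Sum>c\<in>{c\<in>E\<^sub>r. tail\<^sub>r c = u}. slope\<^sub>r \<alpha> c) - (\<Sum>c\<in>{c\<in>E\<^sub>r. head\<^sub>r c = u}. slope\<^sub>r \<alpha> c)"
  and nabla_outside: "u \<notin> V\<^sub>r \<Longrightarrow> nabla\<^sub>r \<alpha> u = 0"
  by (simp_all add: nabla_def sum_negf)

lemma nabla_diff:
  assumes "integral_slopes \<alpha>" "integral_slopes \<beta>"
  shows "nabla\<^sub>r (\<alpha> - \<beta>) u = nabla\<^sub>r \<alpha> u - nabla\<^sub>r \<beta> u"
  by (cases "u \<in> V\<^sub>r")
    (simp_all add: nabla_eq nabla_outside slope_diff(2)[OF assms] sum_subtractf cong: sum.cong_simp)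

lemma nabla_smult:
  assumes "integral_slopes \<alpha>"
  shows "nabla\<^sub>r (\<lambda>u. sc (of_int n) (\<alpha> u)) u = n * nabla\<^sub>r \<alpha> u"
  by (cases "u \<in> V\<^sub>r")
    (simp_all add: nabla_eq nabla_outside slope_smult(2)[OF assms] sum_distrib_left
      right_diff_distrib cong: sum.cong_simp)


text \<open>The edge term \<open>k\<^sub>c (\<alpha>(head c) - \<alpha>(tail c))\<close> of \<open>sum_edges_by_parts\<close> equals
  \<open>k\<^sub>c\<^sup>2 len(e)/r\<close>, so the energy is \<open>-r \<Sum>\<^sub>u \<nabla>\<alpha>(u) \<alpha>(u)\<close>.\<close>

lemma harmonic_energy_eq_0:
  assumes "integral_slopes \<alpha>" "\<And>u. u \<in> V\<^sub>r \<Longrightarrow> nabla\<^sub>r \<alpha> u = 0"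
  shows "(\<Sum>c\<in>E\<^sub>r. sc (of_int (slope\<^sub>r \<alpha> c ^ 2)) (len (fst c))) = 0"
proof
  fix i
  let ?s = "slope\<^sub>r \<alpha>"
  have "(\<Sum>c\<in>E\<^sub>r. of_int (?s c) * (\<alpha> (head\<^sub>r c) i - \<alpha> (tail\<^sub>r c) i))
      = - (\<Sum>u\<in>V\<^sub>r. of_int (nabla\<^sub>r \<alpha> u) * \<alpha> u i)"
    using sum_edges_by_parts[OF finite_sub_vertices finite_sub_edges, of head\<^sub>r tail\<^sub>r ?s]
      head_in_sub_vertices tail_in_sub_vertices
    by (auto simp: image_subset_iff nabla_def intro!: sum.cong)
  also have "\<dots> = 0" using assms(2) by simp
  finally have "(\<Sum>c\<in>E\<^sub>r. of_int (?s c) * (\<alpha> (head\<^sub>r c) i - \<alpha> (tail\<^sub>r c) i)) = 0" .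
  moreover have "(\<Sum>c\<in>E\<^sub>r. of_int (?s c) * (\<alpha> (head\<^sub>r c) i - \<alpha> (tail\<^sub>r c) i))
      = 1 / of_nat r * (\<Sum>c\<in>E\<^sub>r. sc (of_int (?s c ^ 2)) (len (fst c))) i"
    using slope_spec[OF assms(1)]
    by (simp add: sum_distrib_left sum_fun_apply sc_def sub_len_def fun_eq_iff power2_eq_square
        algebra_simps cong: sum.cong_simp)
  ultimately show "(\<Sum>c\<in>E\<^sub>r. sc (of_int (?s c ^ 2)) (len (fst c))) i = 0 i"
    using r_pos by simp
qed

lemma harmonic_imp_edge_constant:
  assumes "integral_slopes \<alpha>" "\<And>u. u \<in> V\<^sub>r \<Longrightarrow> nabla\<^sub>r \<alpha> u = 0" "c \<in> E\<^sub>r"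
  shows "\<alpha> (head\<^sub>r c) = \<alpha> (tail\<^sub>r c)"
proof -
  let ?s = "slope\<^sub>r \<alpha>"
  have fst_c: "fst c \<in> E" using assms(3) by (auto simp: sub_edges_def)
  have "sc (of_int (?s c' ^ 2)) (len (fst c')) \<in> M" if "c' \<in> E\<^sub>r" for c'
    using fine_monoid_smult_nat[OF fine, of "len (fst c')" "nat (?s c' ^ 2)"] edge_props that
    by (auto simp: sub_edges_def)
  then have "sc (of_int (?s c ^ 2)) (len (fst c)) = sc 0 (len (fst c))"
    using sharp_monoid_sum_eq_zero[OF fine sharp finite_sub_edges _ harmonic_energy_eq_0[OF assms(1,2)]
        assms(3)]
    by (simp add: sc_zero_left)
  then have "?s c = 0" using sc_right_cancel edge_props[OF fst_c] by fastforce
  then show ?thesis using slope_spec[OF assms(1,3)] by (simp add: sc_zero_left)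
qed

lemma edge_constant_value_at_vertex:
  assumes "\<And>c. c \<in> E\<^sub>r \<Longrightarrow> \<alpha> (head\<^sub>r c) = \<alpha> (tail\<^sub>r c)" "u \<in> V\<^sub>r"
  shows "\<exists>w\<in>V. \<alpha> u = \<alpha> (Inl w)"
proof -
  have chain: "\<alpha> (node src tgt r e j) = \<alpha> (Inl (src e))" if "e \<in> E" "j \<le> r" for e j
    using that(2)
  proof (induction j)
    case (Suc j)
    then have "(e, j) \<in> E\<^sub>r" using that(1) by (simp add: sub_edges_iff)
    then show ?case using assms(1)[of "(e, j)"] Suc by (simp add: sub_head_def sub_tail_def)
  qed (simp add: node_def)
  from assms(2) consider w where "w \<in> V" "u = Inl w"
    | e j where "e \<in> E" "0 < j" "j < r" "u = node src tgt r e j"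
    unfolding sub_vertices_def node_def by force
  then show ?thesis
  proof cases
    case 2
    then show ?thesis using chain[of e j] edge_props by force
  qed blast
qed


lemma PL_diff:
  assumes "\<alpha> \<in> PL\<^sub>r" "\<beta> \<in> PL\<^sub>r"
  shows "\<alpha> - \<beta> \<in> PL\<^sub>r"
  using assms mgp_diff[OF fine_monoid_scaled_add[OF fine]] slope_diff(1) unfolding PL_iff by simp

lemma edge_constant_in_PL:
  assumes "\<And>c. c \<in> E\<^sub>r \<Longrightarrow> \<psi> (head\<^sub>r c) = \<psi> (tail\<^sub>r c)"
    and "\<forall>u. u \<notin> V\<^sub>r \<longrightarrow> \<psi> u = 0" and "\<And>v. v \<in> V \<Longrightarrow> \<psi> (Inl v) \<in> G\<^sub>r"
  shows "\<psi> \<in> PL\<^sub>r" and "nabla\<^sub>r \<psi> u = 0"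
proof -
  have flat: "\<psi> (head\<^sub>r c) - \<psi> (tail\<^sub>r c) = sc (of_int 0) (len\<^sub>r c)" if "c \<in> E\<^sub>r" for c
    using assms(1)[OF that] by (simp add: sc_zero_left)
  then have "integral_slopes \<psi>" unfolding integral_slopes_def by blast
  then show "\<psi> \<in> PL\<^sub>r"
    using edge_constant_value_at_vertex[OF assms(1)] assms(2,3) unfolding PL_iff by metis
  have "slope\<^sub>r \<psi> c = 0" if "c \<in> E\<^sub>r" for c using slope_eqI[OF that flat[OF that]] .
  then show "nabla\<^sub>r \<psi> u = 0" by (simp add: nabla_def)
qed

lemma PL_add_harmonic:
  assumes "\<gamma> \<in> PL\<^sub>r" "integral_slopes \<phi>" "\<forall>u. u \<notin> V\<^sub>r \<longrightarrow> \<phi> u = 0"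
    and "\<And>u. u \<in> V\<^sub>r \<Longrightarrow> nabla\<^sub>r \<phi> u = 0"
    and "\<And>v. v \<in> V \<Longrightarrow> \<phi> (Inl v) = - sc (of_nat r) (\<gamma> (Inl v))"
  defines "\<beta> \<equiv> \<gamma> + (\<lambda>u. sc (1 / of_nat r) (\<phi> u))"
  shows "\<beta> \<in> PL\<^sub>r" and "\<forall>v\<in>V. \<beta> (Inl v) = 0" and "nabla\<^sub>r \<beta> = nabla\<^sub>r \<gamma>"
proof -
  define \<psi> where "\<psi> = (\<lambda>u. sc (- 1 / of_nat r) (\<phi> u))"
  have \<beta>: "\<beta> = \<gamma> - \<psi>" by (simp add: \<beta>_def \<psi>_def sc_def fun_eq_iff)
  have \<psi>_V: "\<psi> (Inl v) = \<gamma> (Inl v)" if "v \<in> V" for v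
    using assms(5)[OF that] r_pos by (simp add: \<psi>_def sc_def fun_eq_iff)
  have "\<psi> (head\<^sub>r c) = \<psi> (tail\<^sub>r c)" if "c \<in> E\<^sub>r" for c
    using harmonic_imp_edge_constant[OF assms(2,4) that] by (simp add: \<psi>_def)
  moreover have "\<forall>u. u \<notin> V\<^sub>r \<longrightarrow> \<psi> u = 0"
    using assms(3) by (simp add: \<psi>_def sc_def zero_fun_def)
  moreover have "\<psi> (Inl v) \<in> G\<^sub>r" if "v \<in> V" for v
    using assms(1) that unfolding PL_iff \<psi>_V[OF that] by (simp add: sub_vertices_def)
  ultimately have \<psi>: "\<psi> \<in> PL\<^sub>r" "\<And>u. nabla\<^sub>r \<psi> u = 0"
    using edge_constant_in_PL by blast+
  show "\<beta> \<in> PL\<^sub>r" unfolding \<beta> using PL_diff[OF assms(1) \<psi>(1)] .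
  show "\<forall>v\<in>V. \<beta> (Inl v) = 0" using \<psi>_V by (simp add: \<beta>)
  show "nabla\<^sub>r \<beta> = nabla\<^sub>r \<gamma>"
    using nabla_diff \<psi> assms(1) unfolding \<beta> PL_iff by (simp add: fun_eq_iff)
qed

end

theorem mainTheorem11:
  fixes M :: "('k::finite \<Rightarrow> rat) set"
    and V :: "'v set" and E :: "'e set" and src tgt :: "'e \<Rightarrow> 'v"
    and len :: "'e \<Rightarrow> 'k \<Rightarrow> rat" and r :: nat
    and \<delta> D D' :: "'v + ('e \<times> nat) \<Rightarrow> int"
    and \<alpha>D \<alpha>D' :: "'v + ('e \<times> nat) \<Rightarrow> 'k \<Rightarrow> rat"
  assumes "fs_sharp_monoid M"
    and "metric_graph M V E src tgt len"
    and "connected_graph V E src tgt"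
    and "r > 0"
    and "\<forall>u. u \<notin> Inl ` V \<longrightarrow> \<delta> u = 0"
    and "D \<in> divisors V E r" and "D' \<in> divisors V E r"
    and "\<alpha>D \<in> PL M V E src tgt len r" and "\<alpha>D' \<in> PL M V E src tgt len r"
    and "(\<lambda>u. int r * D u) = (\<lambda>u. \<delta> u + nabla V E src tgt len r \<alpha>D u)"
    and "(\<lambda>u. int r * D' u) = (\<lambda>u. \<delta> u + nabla V E src tgt len r \<alpha>D' u)"
    and "\<forall>v\<in>V. \<alpha>D (Inl v) = 0" and "\<forall>v\<in>V. \<alpha>D' (Inl v) = 0"
    and "\<exists>\<gamma>\<in>PL M V E src tgt len r. (\<lambda>u. D' u - D u) = nabla V E src tgt len r \<gamma>"
  shows "\<exists>\<beta>\<in>PL M V E src tgt len r. (\<forall>v\<in>V. \<beta> (Inl v) = 0) \<and>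
           D' = (\<lambda>u. D u + nabla V E src tgt len r \<beta> u)"
proof -
  interpret subdivided_metric_graph M V E src tgt len r
    using assms(1,2,4) by unfold_locales
  obtain \<gamma> where \<gamma>: "\<gamma> \<in> PL\<^sub>r" and nabla_\<gamma>: "\<And>u. nabla\<^sub>r \<gamma> u = D' u - D u"
    using assms(14) by (metis fun_eq_iff)
  have slopes: "integral_slopes \<alpha>D" "integral_slopes \<alpha>D'" "integral_slopes \<gamma>"
    using assms(8,9) \<gamma> unfolding PL_iff by blast+
  define \<phi> where "\<phi> = \<alpha>D' - \<alpha>D - (\<lambda>u. sc (of_int (int r)) (\<gamma> u))"
  define \<beta> where "\<beta> = \<gamma> + (\<lambda>u. sc (1 / of_nat r) (\<phi> u))"
  have "integral_slopes \<phi>"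
    unfolding \<phi>_def using slopes by (intro slope_diff(1) slope_smult(1))
  moreover have "\<forall>u. u \<notin> V\<^sub>r \<longrightarrow> \<phi> u = 0"
    using \<gamma> assms(8,9) unfolding PL_iff by (simp add: \<phi>_def sc_def zero_fun_def)
  moreover have "nabla\<^sub>r \<phi> u = nabla\<^sub>r \<alpha>D' u - nabla\<^sub>r \<alpha>D u - int r * nabla\<^sub>r \<gamma> u" for u
    unfolding \<phi>_def using slopes
    by (simp only: nabla_diff nabla_smult slope_diff(1) slope_smult(1))
  then have "nabla\<^sub>r \<phi> u = 0" for u
    using fun_cong[OF assms(10), of u] fun_cong[OF assms(11), of u] nabla_\<gamma>[of u]
    by (simp add: right_diff_distrib)
  moreover have "\<phi> (Inl v) = - sc (of_nat r) (\<gamma> (Inl v))" if "v \<in> V" for v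
    using that assms(12,13) by (simp add: \<phi>_def)
  ultimately have \<beta>: "\<beta> \<in> PL\<^sub>r" "\<forall>v\<in>V. \<beta> (Inl v) = 0" "nabla\<^sub>r \<beta> = nabla\<^sub>r \<gamma>"
    using PL_add_harmonic[OF \<gamma>, of \<phi>] unfolding \<beta>_def by simp_all
  have "D' = (\<lambda>u. D u + nabla\<^sub>r \<beta> u)" using \<beta>(3) nabla_\<gamma> by (simp add: fun_eq_iff)
  with \<beta>(1,2) show ?thesis by blast
qed

end
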